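(* Let $n$ be odd. Then every integer $m$ with $\gcd(m,2n)=1$ belongs to $\mathcal S(Q_{4n})$.
   Context: $Q_{4n}=\langle x,y : x^{2n}=1,\ y^2=x^n,\ xy=yx^{-1}\rangle$ is the dicyclic group of order $4n$; $\mathcal S(G)$ denotes the set of values of the group determinant of $G$ (determinant of the matrix $(x_{g_ig_j^{-1}})_{i,j}$) when all variables $x_g$ are integers. *)

theory Defs
  imports "HOL-Algebra.Group" "HOL-Combinatorics.Permutations"
begin

text \<open>Group determinant of a finite group G: the determinant of the matrix
  (x (g * h^{-1}))_{g,h in G}, written out via the Leibniz formula for a matrix
  indexed by the finite set carrier G (independent of any ordering of G).\<close>
definition group_det :: "('a, 'b) monoid_scheme \<Rightarrow> ('a \<Rightarrow> int) \<Rightarrow> int" where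
  "group_det G x =
     (\<Sum>\<sigma> | \<sigma> permutes carrier G.
        sign \<sigma> * (\<Prod>g\<in>carrier G. x (g \<otimes>\<^bsub>G\<^esub> inv\<^bsub>G\<^esub> (\<sigma> g))))"

definition group_det_values :: "('a, 'b) monoid_scheme \<Rightarrow> int set" where
  "group_det_values G = {group_det G x | x. True}"

text \<open>The dicyclic group Q_{4n} = <x,y | x^{2n}=1, y^2=x^n, xy=yx^{-1}>, realised in
  normal form: the pair (a,b) with 0 \<le> a < 2n, b \<in> {0,1} stands for x^a y^b.
  Multiplication: x^a y^b * x^c y^d, using y x^c = x^{-c} y and y^2 = x^n.\<close>
definition dicyclic_mult :: "nat \<Rightarrow> int \<times> int \<Rightarrow> int \<times> int \<Rightarrow> int \<times> int" where
  "dicyclic_mult n p q =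
     (let a = fst p; b = snd p; c = fst q; d = snd q in
        if b = 0 then ((a + c) mod (2 * int n), d)
        else if d = 0 then ((a - c) mod (2 * int n), 1)
        else ((a - c + int n) mod (2 * int n), 0))"

definition dicyclic :: "nat \<Rightarrow> (int \<times> int) monoid" where
  "dicyclic n = \<lparr> carrier = {0..<2 * int n} \<times> {0, 1},
     Group.monoid.mult = dicyclic_mult n, Group.monoid.one = (0, 0) \<rparr>"

end

(*
  Take x_g = [g = 1] + W (a mod n) for g = x^a y^b. The group matrix is then the identity plus
  a matrix of rank n, and by Sylvester's identity det (I + X Y) = det (I + Y X) its determinant is
  that of the n x n circulant with symbol 1 + 2 W(t) + 2 W(t^-1) in Z[t]/(t^n - 1).

  For k = 1 (mod 4) invertible modulo n and an odd inverse l of k modulo n, the element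
  V = (1 + t + ... + t^(k-1)) (1 - t^k + t^(2k) - ... + t^((l-1)k)) has circulant determinant k:
  after the substitution t -> t^k, which permutes rows and columns of a circulant, both factors
  become quotients of the invertible elements t - 1 + (1 + ... + t^(n-1)) and 1 + t.
  V is invariant under t -> t^-1 and congruent to 1 modulo 2, so V + 4c has the shape
  1 + 2 W(t) + 2 W(t^-1); its determinant k + 4cn equals any given m = 1 (mod 4) coprime to n.
  Finally, left translation by y permutes the rows of the group matrix in n four-cycles and so
  multiplies the group determinant by (-1)^n = -1, which covers m = 3 (mod 4).
*)
theory Submission
  imports Defs "Jordan_Normal_Form.Determinant" "HOL-Number_Theory.Cong"
begin

section \<open>Determinant identities\<close>

lemma det_one_plus_mult_commute:
  fixes A :: "'a :: idom mat"
  assumes A: "A \<in> carrier_mat n k" and B: "B \<in> carrier_mat k n"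
  shows "det (1\<^sub>m n + A * B) = det (1\<^sub>m k + B * A)"
proof -
  let ?M = "four_block_mat (1\<^sub>m n) (-A) B (1\<^sub>m k)"
  let ?U = "four_block_mat (1\<^sub>m n) A (0\<^sub>m k n) (1\<^sub>m k)"
  have M: "?M \<in> carrier_mat (n + k) (n + k)" and U: "?U \<in> carrier_mat (n + k) (n + k)"
    using A B by auto
  have det_U: "det ?U = 1"
    by (subst det_four_block_mat_lower_left_zero[of _ n _ k]) (use A in auto)
  have "?M * ?U = four_block_mat (1\<^sub>m n) (0\<^sub>m n k) B (1\<^sub>m k + B * A)"
    by (subst mult_four_block_mat[of _ n n _ k _ k]) (use A B in auto)
  then have "det (?M * ?U) = det (1\<^sub>m k + B * A)"
    by (simp, subst det_four_block_mat_upper_right_zero[of _ n _ k]) (use A B in auto)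
  moreover have "?U * ?M = four_block_mat (1\<^sub>m n + A * B) (0\<^sub>m n k) B (1\<^sub>m k)"
    by (subst mult_four_block_mat[of _ n n _ k _ k]) (use A B in auto)
  then have "det (?U * ?M) = det (1\<^sub>m n + A * B)"
    by (simp, subst det_four_block_mat_upper_right_zero[of _ n _ k]) (use A B in auto)
  ultimately show ?thesis
    using det_mult[OF M U] det_mult[OF U M] det_U by (simp add: mult.commute)
qed

lemma det_permute_rows_cols:
  fixes A :: "'a :: comm_ring_1 mat"
  assumes A: "A \<in> carrier_mat n n" and p: "p permutes {0..<n}"
  shows "det (mat n n (\<lambda>(i, j). A $$ (p i, p j))) = det A"
proof -
  let ?B = "mat n n (\<lambda>(i, j). A $$ (i, p j))"
  have B: "?B \<in> carrier_mat n n" by auto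
  have "mat n n (\<lambda>(i, j). A $$ (p i, p j)) = mat n n (\<lambda>(i, j). ?B $$ (p i, j))"
    using permutes_in_image[OF p] by (intro eq_matI) auto
  then have rows: "det (mat n n (\<lambda>(i, j). A $$ (p i, p j))) = signof p * det ?B"
    using det_permute_rows[OF B p] by simp
  have "transpose_mat ?B = mat n n (\<lambda>(i, j). transpose_mat A $$ (p i, j))"
    using permutes_in_image[OF p] A by (intro eq_matI) auto
  then have "det (transpose_mat ?B) = signof p * det (transpose_mat A)"
    using det_permute_rows[of "transpose_mat A" n p] A p by simp
  then have cols: "det ?B = signof p * det A"
    using det_transpose[OF B] det_transpose[OF A] by simp
  have "signof p * signof p = (1 :: 'a)"
    by (simp flip: of_int_mult)
  then show ?thesis
    using rows cols by (simp flip: mult.assoc)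
qed

lemma leibniz_sum_reindex_det:
  fixes F :: "'b \<Rightarrow> 'b \<Rightarrow> int"
  assumes bij: "bij_betw e {0..<N} S"
  shows "(\<Sum>\<sigma> | \<sigma> permutes S. sign \<sigma> * (\<Prod>g\<in>S. F g (\<sigma> g)))
       = det (mat N N (\<lambda>(p, q). F (e p) (e q)))"
proof -
  let ?A = "{0..<N}"
  let ?e' = "inv_into ?A e"
  have inj: "inj_on e ?A"
    using bij by (simp add: bij_betw_def)
  have bij': "bij_betw ?e' S ?A"
    by (rule bij_betw_inv_into[OF bij])
  have "det (mat N N (\<lambda>(p, q). F (e p) (e q)))
      = (\<Sum>\<pi> | \<pi> permutes ?A. sign \<pi> * (\<Prod>p\<in>?A. F (e p) (e (\<pi> p))))"
    by (subst det_def'[of _ N]) (auto intro!: sum.cong prod.cong simp: permutes_in_image)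
  also have "\<dots> = (\<Sum>\<sigma> | \<sigma> permutes S. sign \<sigma> * (\<Prod>g\<in>S. F g (\<sigma> g)))"
  proof (rule sum.reindex_bij_witness[of _ "map_permutation S ?e'" "map_permutation ?A e"])
    fix \<pi> assume "\<pi> \<in> {\<pi>. \<pi> permutes ?A}"
    then have \<pi>: "\<pi> permutes ?A"
      by simp
    show "map_permutation S ?e' (map_permutation ?A e \<pi>) = \<pi>"
      by (rule map_permutation_compose_inv[OF bij \<pi>]) (simp add: inj)
    show "map_permutation ?A e \<pi> \<in> {\<sigma>. \<sigma> permutes S}"
      using map_permutation_permutes[OF bij \<pi>] by simp
    have "(\<Prod>g\<in>S. F g (map_permutation ?A e \<pi> g)) = (\<Prod>p\<in>?A. F (e p) (map_permutation ?A e \<pi> (e p)))"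
      using prod.reindex_bij_betw[OF bij, of "\<lambda>g. F g (map_permutation ?A e \<pi> g)"] by simp
    also have "\<dots> = (\<Prod>p\<in>?A. F (e p) (e (\<pi> p)))"
      by (intro prod.cong refl) (simp add: map_permutation_apply[OF inj])
    finally show "sign (map_permutation ?A e \<pi>) * (\<Prod>g\<in>S. F g (map_permutation ?A e \<pi> g))
        = sign \<pi> * (\<Prod>p\<in>?A. F (e p) (e (\<pi> p)))"
      using sign_map_permutation[OF inj \<pi>] by simp
  next
    fix \<sigma> assume "\<sigma> \<in> {\<sigma>. \<sigma> permutes S}"
    then have \<sigma>: "\<sigma> permutes S"
      by simp
    show "map_permutation ?A e (map_permutation S ?e' \<sigma>) = \<sigma>"
      by (rule map_permutation_compose_inv[OF bij' \<sigma>]) (use bij in \<open>simp add: bij_betw_inv_into_right\<close>)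
    show "map_permutation S ?e' \<sigma> \<in> {\<pi>. \<pi> permutes ?A}"
      using map_permutation_permutes[OF bij' \<sigma>] by simp
  qed
  finally show ?thesis ..
qed

lemma sum_lessThan_int: "(\<Sum>i<n. f (int i)) = (\<Sum>j\<in>{0..<int n}. f j)"
proof -
  have "{0..<int n} = int ` {..<n}"
    by (simp add: image_int_atLeastLessThan lessThan_atLeast0)
  then show ?thesis
    by (simp add: sum.reindex)
qed

lemma cong_int_diff_zero_iff:
  "i < n \<Longrightarrow> j < n \<Longrightarrow> [int i - int j = 0] (mod int n) \<longleftrightarrow> i = j"
  by (simp add: cong_0_iff mod_eq_dvd_iff[symmetric])

lemma sum_mod_reflect:
  "(\<Sum>j\<in>{0..<int n}. g ((c - j) mod int n)) = (\<Sum>j\<in>{0..<int n}. g j)"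
proof -
  have "bij_betw (\<lambda>j. (c - j) mod int n) {0..<int n} {0..<int n}"
    by (rule bij_betw_byWitness[where f' = "\<lambda>j. (c - j) mod int n"])
      (auto simp: mod_diff_right_eq)
  then show ?thesis
    by (rule sum.reindex_bij_betw)
qed

lemma sum_mod_shift:
  "(\<Sum>j\<in>{0..<int n}. g ((j + c) mod int n)) = (\<Sum>j\<in>{0..<int n}. g j)"
proof -
  have "bij_betw (\<lambda>j. (j + c) mod int n) {0..<int n} {0..<int n}"
    by (rule bij_betw_byWitness[where f' = "\<lambda>j. (j - c) mod int n"])
      (auto simp: mod_diff_left_eq mod_add_left_eq)
  then show ?thesis
    by (rule sum.reindex_bij_betw)
qed

lemma diff_one_mod_eq:
  fixes d N :: int
  assumes "N > 0"
  shows "(d - 1) mod N = (if d mod N = 0 then N - 1 else d mod N - 1)"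
proof -
  have "(d - 1) mod N = (d mod N - 1) mod N"
    by (simp add: mod_diff_left_eq)
  moreover have "0 \<le> d mod N" "d mod N < N"
    using assms by auto
  ultimately show ?thesis
    using assms by (cases "d mod N = 0") (simp_all add: zmod_minus1)
qed

lemma mod_add_mod_diff_eq: "(u + x mod (N :: int) - v) mod N = (u + x - v) mod N"
  by (metis mod_add_right_eq mod_diff_left_eq)

lemma mod_mod_diff_add_eq: "(x mod (N :: int) - u + v) mod N = (x - u + v) mod N"
  by (metis mod_add_left_eq mod_diff_left_eq)

lemma mod_add_mult_mod_eq: "(a + s * (b mod (N :: int))) mod N = (a + s * b) mod N"
  by (metis mod_add_right_eq mod_mult_right_eq)

lemma neg_mod_double_mod:
  fixes l n :: nat
  assumes "l < n"
  shows "(- ((- int l) mod (2 * int n))) mod int n = int l"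
proof -
  have "(- ((- int l) mod (2 * int n))) mod int n = (- ((- int l) mod (2 * int n) mod int n)) mod int n"
    by (simp add: mod_minus_eq)
  also have "\<dots> = (- ((- int l) mod int n)) mod int n"
    by (simp add: mod_mod_cancel)
  also have "\<dots> = int l"
    using assms by (simp add: mod_minus_eq)
  finally show ?thesis .
qed

lemma mod_4_cases:
  fixes q :: nat
  obtains "q mod 4 = 0" | "q mod 4 = 1" | "q mod 4 = 2" | "q mod 4 = 3"
  by linarith

lemma four_mul_add_div_mod:
  fixes l :: nat
  shows "(4 * l) div 4 = l" "(4 * l) mod 4 = 0" "(4 * l + 1) div 4 = l" "(4 * l + 1) mod 4 = 1"
    "(4 * l + 2) div 4 = l" "(4 * l + 2) mod 4 = 2" "(4 * l + 3) div 4 = l" "(4 * l + 3) mod 4 = 3"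
  by presburger+

lemma alternating_telescope:
  fixes f :: "nat \<Rightarrow> 'a :: comm_ring_1"
  shows "(\<Sum>j<m. (-1) ^ j * (f (Suc j) + f j)) = f 0 - (-1) ^ m * f m"
  by (induction m) (simp_all add: algebra_simps)

lemma sum_neg_one_power: "(\<Sum>j<m. (-1) ^ j :: 'a :: comm_ring_1) = (if even m then 0 else 1)"
  by (induction m) auto

lemma sum_lessThan_reverse2:
  "(\<Sum>i<k. \<Sum>j<l. f i j) = (\<Sum>i<k. \<Sum>j<l. f (k - Suc i) (l - Suc j))"
proof -
  have inner: "(\<Sum>j<l. f i (l - Suc j)) = (\<Sum>j<l. f i j)" for i
    using sum.nat_diff_reindex[of "f i" l] by simp
  have "(\<Sum>i<k. \<Sum>j<l. f (k - Suc i) (l - Suc j)) = (\<Sum>i<k. \<Sum>j<l. f (k - Suc i) j)"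
    by (simp only: inner)
  also have "\<dots> = (\<Sum>i<k. \<Sum>j<l. f i j)"
    using sum.nat_diff_reindex[of "\<lambda>i. \<Sum>j<l. f i j" k] by simp
  finally show ?thesis ..
qed

lemma exists_odd_inverse_mod:
  assumes "n > 0" and "coprime (int k) (2 * int n)"
  obtains l :: nat where "odd l" and "[int k * int l = 1] (mod int n)"
proof -
  obtain x where x: "[int k * x = 1] (mod 2 * int n)"
    using cong_solve_coprime_int[OF assms(2)] by blast
  define l where "l = nat (x mod (2 * int n))"
  have "int l = x mod (2 * int n)"
    using assms(1) by (simp add: l_def)
  then have inverse: "[int k * int l = 1] (mod 2 * int n)"
    using x by (simp add: cong_def mod_mult_right_eq)
  have "[int k * int l = 1] (mod 2)"
    by (rule cong_dvd_modulus[OF inverse]) simp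
  then have "(int k * int l) mod 2 = 1"
    by (simp add: cong_def)
  then have "odd (int k * int l)"
    by (simp only: odd_iff_mod_2_eq_one)
  moreover have "[int k * int l = 1] (mod int n)"
    by (rule cong_dvd_modulus[OF inverse]) simp
  ultimately show thesis
    using that by auto
qed

lemma exists_positive_shift_mod_4n:
  assumes "n > 0" and "[m = 1] (mod 4)" and "coprime m (int n)"
  obtains k :: nat and t :: int where "k > 0" and "int k = m + 4 * int n * t"
    and "[int k = 1] (mod 4)" and "coprime (int k) (2 * int n)"
proof -
  define t where "t = \<bar>m\<bar>"
  have "m \<noteq> 0"
    using assms(2) by (auto simp: cong_def)
  then have "t > 0"
    by (simp add: t_def)
  moreover have "t \<le> int n * t"
    using assms(1) \<open>t > 0\<close> by simp
  ultimately have pos: "m + 4 * int n * t > 0"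
    unfolding t_def by linarith
  define k where "k = nat (m + 4 * int n * t)"
  have k: "int k = m + 4 * int n * t" and "k > 0"
    using pos by (simp_all add: k_def)
  have k_mod_4: "[int k = 1] (mod 4)"
    using assms(2) by (simp add: k cong_def mult.assoc)
  have "gcd (int n) ((4 * t) * int n + m) = 1"
    using assms(3) by (simp only: gcd_add_mult) (simp add: coprime_iff_gcd_eq_1 gcd.commute)
  then have "coprime (int k) (int n)"
    by (simp add: k coprime_iff_gcd_eq_1 gcd.commute algebra_simps)
  moreover have "int k mod 4 = 1"
    using k_mod_4 by (simp add: cong_def)
  then have "odd (int k)"
    by presburger
  ultimately have "coprime (int k) (2 * int n)"
    by simp
  with \<open>k > 0\<close> k k_mod_4 show thesis
    by (rule that)
qed

section \<open>Circulant matrices\<close>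

text \<open>A function \<open>u :: int \<Rightarrow> 'a\<close>, read on the residues \<open>0..<n\<close>, stands for the element
  \<open>\<Sum>\<^sub>d u d t^d\<close> of the group ring \<open>'a[t]/(t^n - 1)\<close>: \<open>circulant n u\<close> is its regular
  representation, \<open>cyc_conv\<close> the multiplication and \<open>cyc_delta n a\<close> the monomial \<open>t^a\<close>.\<close>

definition circulant :: "nat \<Rightarrow> (int \<Rightarrow> 'a :: comm_ring_1) \<Rightarrow> 'a mat" where
  "circulant n u = mat n n (\<lambda>(i, j). u ((int i - int j) mod int n))"

definition cyc_conv :: "nat \<Rightarrow> (int \<Rightarrow> 'a :: comm_ring_1) \<Rightarrow> (int \<Rightarrow> 'a) \<Rightarrow> int \<Rightarrow> 'a" where
  "cyc_conv n u v d = (\<Sum>j\<in>{0..<int n}. u j * v ((d - j) mod int n))"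

definition cyc_delta :: "nat \<Rightarrow> int \<Rightarrow> int \<Rightarrow> 'a :: comm_ring_1" where
  "cyc_delta n a d = (if [d = a] (mod int n) then 1 else 0)"

lemma circulant_carrier [simp]: "circulant n u \<in> carrier_mat n n"
  by (simp add: circulant_def)

lemma circulant_cong:
  "(\<And>d. d \<in> {0..<int n} \<Longrightarrow> u d = v d) \<Longrightarrow> circulant n u = circulant n v"
  unfolding circulant_def by (intro eq_matI) auto

lemma cyc_conv_mod [simp]: "cyc_conv n u v (d mod int n) = cyc_conv n u v d"
  by (simp add: cyc_conv_def mod_diff_left_eq)

lemma circulant_mult: "circulant n u * circulant n v = circulant n (cyc_conv n u v)"
proof (rule eq_matI)
  fix i k
  assume "i < dim_row (circulant n (cyc_conv n u v))" "k < dim_col (circulant n (cyc_conv n u v))"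
  then have i: "i < n" and k: "k < n"
    by (auto simp: circulant_def)
  have "(circulant n u * circulant n v) $$ (i, k)
      = (\<Sum>t<n. u ((int i - int t) mod int n) * v ((int t - int k) mod int n))"
    using i k by (simp add: circulant_def scalar_prod_def atLeast0LessThan)
  also have "\<dots> = (\<Sum>t\<in>{0..<int n}. u ((int i - t) mod int n) * v ((t - int k) mod int n))"
    by (rule sum_lessThan_int)
  also have "\<dots> = (\<Sum>j\<in>{0..<int n}. u ((int i - (int i - j) mod int n) mod int n)
                      * v (((int i - j) mod int n - int k) mod int n))"
    by (rule sum_mod_reflect[symmetric])
  also have "\<dots> = (\<Sum>j\<in>{0..<int n}. u j * v ((int i - int k - j) mod int n))"
    by (intro sum.cong refl) (simp add: mod_diff_right_eq mod_diff_left_eq algebra_simps)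
  also have "\<dots> = circulant n (cyc_conv n u v) $$ (i, k)"
    using i k by (simp add: circulant_def cyc_conv_def mod_diff_left_eq)
  finally show "(circulant n u * circulant n v) $$ (i, k) = circulant n (cyc_conv n u v) $$ (i, k)" .
qed (auto simp: circulant_def)

lemma cyc_conv_commute: "cyc_conv n u v d = cyc_conv n v u d"
proof -
  have "cyc_conv n v u d = (\<Sum>j\<in>{0..<int n}. v ((d - j) mod int n) * u ((d - (d - j) mod int n) mod int n))"
    unfolding cyc_conv_def by (rule sum_mod_reflect[symmetric])
  also have "\<dots> = cyc_conv n u v d"
    unfolding cyc_conv_def by (intro sum.cong refl) (simp add: mod_diff_right_eq mult.commute)
  finally show ?thesis ..
qed

lemma cyc_conv_assoc: "cyc_conv n (cyc_conv n u v) w d = cyc_conv n u (cyc_conv n v w) d"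
proof -
  have inner: "(\<Sum>j\<in>{0..<int n}. v ((j - i) mod int n) * w ((d - j) mod int n))
      = cyc_conv n v w ((d - i) mod int n)" for i
  proof -
    have "(\<Sum>j\<in>{0..<int n}. v ((j - i) mod int n) * w ((d - j) mod int n))
        = (\<Sum>l\<in>{0..<int n}. v (((l + i) mod int n - i) mod int n) * w ((d - (l + i) mod int n) mod int n))"
      by (rule sum_mod_shift[symmetric])
    also have "\<dots> = cyc_conv n v w (d - i)"
      unfolding cyc_conv_def by (intro sum.cong refl) (simp add: mod_diff_left_eq mod_diff_right_eq algebra_simps)
    finally show ?thesis by simp
  qed
  have "cyc_conv n (cyc_conv n u v) w d
      = (\<Sum>i\<in>{0..<int n}. u i * (\<Sum>j\<in>{0..<int n}. v ((j - i) mod int n) * w ((d - j) mod int n)))"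
    unfolding cyc_conv_def sum_distrib_left sum_distrib_right
    by (subst sum.swap) (simp add: mult.assoc)
  then show ?thesis
    unfolding inner by (simp add: cyc_conv_def)
qed

lemma cyc_delta_mod [simp]: "cyc_delta n a (d mod int n) = cyc_delta n a d"
  by (simp add: cyc_delta_def)

lemma of_int_cyc_delta [simp]: "of_int (cyc_delta n a d) = cyc_delta n a d"
  by (simp add: cyc_delta_def)

lemma cyc_delta_diff: "cyc_delta n a (d - b) = cyc_delta n (a + b) d"
  by (simp add: cyc_delta_def cong_iff_dvd_diff algebra_simps)

lemma cyc_delta_minus: "cyc_delta n a (- d) = cyc_delta n (- a) d"
  using cong_minus_minus_iff[of d "- a" "int n"] by (simp add: cyc_delta_def)

lemma cyc_delta_cong: "[a = a'] (mod int n) \<Longrightarrow> cyc_delta n a d = cyc_delta n a' d"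
  by (auto simp: cyc_delta_def intro: cong_trans cong_sym)

lemma cyc_delta_dilate:
  assumes "[\<kappa> * k = 1] (mod int n)"
  shows "cyc_delta n a (\<kappa> * d) = cyc_delta n (k * a) d"
proof -
  have cancel: "[k * (\<kappa> * x) = x] (mod int n)" "[\<kappa> * (k * x) = x] (mod int n)" for x
    using cong_scalar_right[OF assms, of x] by (simp_all add: ac_simps)
  have "[\<kappa> * d = a] (mod int n) \<longleftrightarrow> [d = k * a] (mod int n)"
  proof
    assume "[\<kappa> * d = a] (mod int n)"
    then have "[k * (\<kappa> * d) = k * a] (mod int n)"
      by (rule cong_scalar_left)
    then show "[d = k * a] (mod int n)"
      using cancel(1) by (meson cong_sym cong_trans)
  next
    assume "[d = k * a] (mod int n)"
    then have "[\<kappa> * d = \<kappa> * (k * a)] (mod int n)"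
      by (rule cong_scalar_left)
    then show "[\<kappa> * d = a] (mod int n)"
      using cancel(2) by (meson cong_trans)
  qed
  then show ?thesis
    by (simp add: cyc_delta_def)
qed

lemma sum_cyc_delta_mult:
  assumes "n > 0"
  shows "(\<Sum>j\<in>{0..<int n}. cyc_delta n a j * f j) = f (a mod int n)"
proof -
  have "(\<Sum>j\<in>{0..<int n}. cyc_delta n a j * f j) = (\<Sum>j\<in>{0..<int n}. if j = a mod int n then f j else 0)"
    by (intro sum.cong refl) (auto simp: cyc_delta_def cong_def)
  then show ?thesis
    using assms by simp
qed

lemma sum_cyc_delta: "n > 0 \<Longrightarrow> sum (cyc_delta n a) {0..<int n} = 1"
  using sum_cyc_delta_mult[of n a "\<lambda>_. 1"] by simp

lemma cyc_conv_delta: "n > 0 \<Longrightarrow> cyc_conv n (cyc_delta n a) v d = v ((d - a) mod int n)"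
  by (simp add: cyc_conv_def sum_cyc_delta_mult mod_diff_right_eq)

lemma cyc_conv_delta_right: "n > 0 \<Longrightarrow> cyc_conv n u (cyc_delta n a) d = u ((d - a) mod int n)"
  by (simp add: cyc_conv_commute[of n u] cyc_conv_delta)

lemma cyc_conv_const: "cyc_conv n u (\<lambda>_. c) d = c * sum u {0..<int n}"
  by (simp add: cyc_conv_def sum_distrib_left mult.commute)

lemma cyc_conv_add_right: "cyc_conv n u (\<lambda>d. v d + w d) d = cyc_conv n u v d + cyc_conv n u w d"
  by (simp add: cyc_conv_def distrib_left sum.distrib)

lemma cyc_conv_add_left: "cyc_conv n (\<lambda>d. u d + v d) w d = cyc_conv n u w d + cyc_conv n v w d"
  by (simp add: cyc_conv_def distrib_right sum.distrib)

lemma cyc_conv_diff_left: "cyc_conv n (\<lambda>d. u d - v d) w d = cyc_conv n u w d - cyc_conv n v w d"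
  by (simp add: cyc_conv_def left_diff_distrib sum_subtractf)

lemma cyc_conv_scale_left: "cyc_conv n (\<lambda>d. c * u d) v d = c * cyc_conv n u v d"
  by (simp add: cyc_conv_def sum_distrib_left mult.assoc)

lemma cyc_conv_sum_left: "cyc_conv n (\<lambda>d. \<Sum>i\<in>I. f i d) v d = (\<Sum>i\<in>I. cyc_conv n (f i) v d)"
  by (simp add: cyc_conv_def sum_distrib_right sum.swap[of _ I])

lemma sum_cyc_conv: "sum (cyc_conv n u v) {0..<int n} = sum u {0..<int n} * sum v {0..<int n}"
proof -
  have inner: "(\<Sum>d\<in>{0..<int n}. v ((d - j) mod int n)) = sum v {0..<int n}" for j
    using sum_mod_shift[of v "- j" n] by simp
  have "sum (cyc_conv n u v) {0..<int n} = (\<Sum>j\<in>{0..<int n}. u j * (\<Sum>d\<in>{0..<int n}. v ((d - j) mod int n)))"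
    unfolding cyc_conv_def sum_distrib_left by (subst sum.swap) simp
  then show ?thesis
    by (simp add: inner sum_distrib_right)
qed

lemma circulant_delta_zero: "circulant n (\<lambda>d. c * cyc_delta n 0 d) = c \<cdot>\<^sub>m 1\<^sub>m n"
  unfolding circulant_def cyc_delta_def
  by (intro eq_matI) (auto simp: cong_int_diff_zero_iff)

lemma det_circulant_delta_plus_const:
  "det (circulant n (\<lambda>d. cyc_delta n 0 d + c)) = 1 + of_nat n * (c :: 'a :: idom)"
proof -
  let ?X = "mat n 1 (\<lambda>_. c)" and ?Y = "mat 1 n (\<lambda>_. 1 :: 'a)"
  have "circulant n (\<lambda>d. cyc_delta n 0 d + c) = 1\<^sub>m n + ?X * ?Y"
    unfolding circulant_def cyc_delta_def
    by (intro eq_matI) (auto simp: cong_int_diff_zero_iff scalar_prod_def)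
  also have "det \<dots> = det (1\<^sub>m 1 + ?Y * ?X)"
    by (rule det_one_plus_mult_commute) auto
  also have "\<dots> = 1 + of_nat n * c"
    by (subst det_single) (auto simp: scalar_prod_def)
  finally show ?thesis .
qed

lemma det_circulant_ne_zero:
  fixes u :: "int \<Rightarrow> 'a :: idom"
  assumes "\<And>d. cyc_conv n u v d = c * cyc_delta n 0 d" and "c \<noteq> 0"
  shows "det (circulant n u) \<noteq> 0"
proof -
  have "cyc_conv n u v = (\<lambda>d. c * cyc_delta n 0 d)"
    using assms(1) by (simp add: fun_eq_iff)
  then have "circulant n u * circulant n v = c \<cdot>\<^sub>m 1\<^sub>m n"
    by (simp add: circulant_mult circulant_delta_zero)
  then have "det (circulant n u) * det (circulant n v) = c ^ n"
    by (metis det_mult[OF circulant_carrier circulant_carrier] det_smult det_one index_one_mat(3) mult_1_right)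
  then show ?thesis
    using assms(2) by auto
qed

lemma det_circulant_add_const:
  fixes u :: "int \<Rightarrow> 'a :: field"
  assumes sum: "sum u {0..<int n} = s" and s: "s \<noteq> 0"
  shows "det (circulant n (\<lambda>d. u d + e)) = det (circulant n u) * (1 + of_nat n * (e / s))"
proof -
  have n: "n > 0"
    using sum s by (cases n) auto
  have "circulant n u * circulant n (\<lambda>d. cyc_delta n 0 d + e / s) = circulant n (\<lambda>d. u d + e)"
    unfolding circulant_mult
    by (rule circulant_cong) (use n s in \<open>simp add: cyc_conv_add_right cyc_conv_delta_right cyc_conv_const sum\<close>)
  then show ?thesis
    by (metis det_mult[OF circulant_carrier circulant_carrier] det_circulant_delta_plus_const)
qed

lemma det_circulant_dilate:
  assumes n: "n > 0" and unit: "[\<kappa> * k = 1] (mod int n)"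
  shows "det (circulant n (\<lambda>d. u ((\<kappa> * d) mod int n))) = det (circulant n u)"
proof -
  define p where "p i = (if i < n then nat ((\<kappa> * int i) mod int n) else i)" for i
  have p_less: "p i < n" if "i < n" for i
    using that n by (simp add: p_def nat_less_iff)
  have "inj_on p {0..<n}"
  proof (rule inj_onI)
    fix i j assume i: "i \<in> {0..<n}" and j: "j \<in> {0..<n}" and "p i = p j"
    then have "[\<kappa> * int i = \<kappa> * int j] (mod int n)"
      using n by (simp add: p_def cong_def eq_nat_nat_iff)
    then have "[k * (\<kappa> * int i) = k * (\<kappa> * int j)] (mod int n)"
      by (rule cong_scalar_left)
    moreover have "[k * (\<kappa> * x) = x] (mod int n)" for x
      using cong_scalar_right[OF unit, of x] by (simp add: ac_simps)
    ultimately have "[int i = int j] (mod int n)"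
      by (meson cong_sym cong_trans)
    then show "i = j"
      using i j by (simp add: cong_def)
  qed
  then have perm: "p permutes {0..<n}"
    using p_less by (intro bij_imp_permutes endo_inj_surj bij_betw_imageI) (auto simp: p_def)
  have "circulant n (\<lambda>d. u ((\<kappa> * d) mod int n)) = mat n n (\<lambda>(i, j). circulant n u $$ (p i, p j))"
    using n p_less
    by (intro eq_matI) (auto simp: circulant_def p_def mod_diff_eq right_diff_distrib mod_mult_right_eq)
  then show ?thesis
    using det_permute_rows_cols[OF circulant_carrier perm] by simp
qed

lemma of_int_det_circulant:
  "of_int (det (circulant n u)) = (det (circulant n (\<lambda>d. of_int (u d))) :: 'a :: comm_ring_1)"
proof -
  have "map_mat of_int (circulant n u) = (circulant n (\<lambda>d. of_int (u d)) :: 'a mat)"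
    by (intro eq_matI) (auto simp: circulant_def)
  then show ?thesis
    by (metis of_int_hom.hom_det)
qed

section \<open>A circulant of determinant k\<close>

text \<open>In the group ring, \<open>cyc_step n a\<close> is
  \<open>t^a - 1 + (1 + t + \<dots> + t^(n-1))\<close>, \<open>cyc_pair n a\<close> is \<open>1 + t^a\<close>, \<open>cyc_block n k\<close> is
  \<open>1 + t + \<dots> + t^(k-1)\<close>, \<open>cyc_alt_block n k\<close> is \<open>1 - t + \<dots> \<plusminus> t^(k-1)\<close> and
  \<open>cyc_alt_prog n k l\<close> is \<open>1 - t^k + t^(2k) - \<dots> \<plusminus> t^((l-1)k)\<close>.\<close>

definition cyc_step :: "nat \<Rightarrow> int \<Rightarrow> int \<Rightarrow> 'a :: comm_ring_1" where
  "cyc_step n a d = cyc_delta n a d - cyc_delta n 0 d + 1"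

definition cyc_pair :: "nat \<Rightarrow> int \<Rightarrow> int \<Rightarrow> 'a :: comm_ring_1" where
  "cyc_pair n a d = cyc_delta n 0 d + cyc_delta n a d"

definition cyc_block :: "nat \<Rightarrow> nat \<Rightarrow> int \<Rightarrow> 'a :: comm_ring_1" where
  "cyc_block n k d = (\<Sum>i<k. cyc_delta n (int i) d)"

definition cyc_alt_block :: "nat \<Rightarrow> nat \<Rightarrow> int \<Rightarrow> 'a :: comm_ring_1" where
  "cyc_alt_block n k d = (\<Sum>i<k. (-1) ^ i * cyc_delta n (int i) d)"

definition cyc_alt_prog :: "nat \<Rightarrow> nat \<Rightarrow> nat \<Rightarrow> int \<Rightarrow> 'a :: comm_ring_1" where
  "cyc_alt_prog n k l d = (\<Sum>j<l. (-1) ^ j * cyc_delta n (int k * int j) d)"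

definition cyc_block_prog :: "nat \<Rightarrow> nat \<Rightarrow> nat \<Rightarrow> int \<Rightarrow> 'a :: comm_ring_1" where
  "cyc_block_prog n k l = cyc_conv n (cyc_block n k) (cyc_alt_prog n k l)"

lemma cyc_step_mod [simp]: "cyc_step n a (d mod int n) = cyc_step n a d"
  by (simp add: cyc_step_def)

lemma cyc_pair_mod [simp]: "cyc_pair n a (d mod int n) = cyc_pair n a d"
  by (simp add: cyc_pair_def)

lemma cyc_step_dilate:
  assumes "[\<kappa> * k = 1] (mod int n)"
  shows "cyc_step n a (\<kappa> * d) = cyc_step n (k * a) d"
  by (simp add: cyc_step_def cyc_delta_dilate[OF assms])

lemma cyc_pair_dilate:
  assumes "[\<kappa> * k = 1] (mod int n)"
  shows "cyc_pair n a (\<kappa> * d) = cyc_pair n (k * a) d"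
  by (simp add: cyc_pair_def cyc_delta_dilate[OF assms])

lemma sum_cyc_step: "n > 0 \<Longrightarrow> sum (cyc_step n a) {0..<int n} = of_nat n"
  by (simp add: cyc_step_def sum.distrib sum_subtractf sum_cyc_delta)

lemma sum_cyc_block: "n > 0 \<Longrightarrow> sum (cyc_block n k) {0..<int n} = of_nat k"
  unfolding cyc_block_def by (subst sum.swap) (simp add: sum_cyc_delta)

lemma sum_cyc_alt_prog: "n > 0 \<Longrightarrow> odd l \<Longrightarrow> sum (cyc_alt_prog n k l) {0..<int n} = 1"
  unfolding cyc_alt_prog_def
  by (subst sum.swap) (simp add: sum_cyc_delta sum_neg_one_power flip: sum_distrib_left)

lemma cyc_conv_cyc_step:
  "n > 0 \<Longrightarrow> cyc_conv n (cyc_step n a) v d = v ((d - a) mod int n) - v (d mod int n) + sum v {0..<int n}"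
  unfolding cyc_step_def
  by (simp add: cyc_conv_add_left cyc_conv_diff_left cyc_conv_delta cyc_conv_commute[of n "\<lambda>_. 1"] cyc_conv_const)

lemma cyc_conv_cyc_pair:
  "n > 0 \<Longrightarrow> cyc_conv n (cyc_pair n a) v d = v (d mod int n) + v ((d - a) mod int n)"
  unfolding cyc_pair_def by (simp add: cyc_conv_add_left cyc_conv_delta)

lemma det_circulant_cyc_step_ne_zero:
  assumes n: "n > 0"
  shows "det (circulant n (cyc_step n 1) :: 'a :: field_char_0 mat) \<noteq> 0"
proof -
  define S :: 'a where "S = (\<Sum>j\<in>{0..<int n}. of_int j)"
  define B :: "int \<Rightarrow> 'a" where "B d = of_int (d mod int n) + (1 - S) / of_nat n" for d
  have "sum B {0..<int n} = (\<Sum>j\<in>{0..<int n}. of_int j + (1 - S) / of_nat n)"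
    unfolding B_def by (intro sum.cong) auto
  also have "\<dots> = S + of_nat n * ((1 - S) / of_nat n)"
    by (simp add: sum.distrib S_def)
  also have "\<dots> = 1"
    using n by simp
  finally have sum_B: "sum B {0..<int n} = 1" .
  have "cyc_conv n (cyc_step n 1) B d = of_int ((d - 1) mod int n) - of_int (d mod int n) + 1" for d
    using n by (simp add: cyc_conv_cyc_step sum_B) (simp add: B_def)
  also have "of_int ((d - 1) mod int n) - of_int (d mod int n) + 1 = (of_nat n * cyc_delta n 0 d :: 'a)" for d
    using n by (simp add: diff_one_mod_eq cyc_delta_def cong_def)
  finally have "cyc_conv n (cyc_step n 1) B d = of_nat n * cyc_delta n 0 d" for d .
  then show ?thesis
    by (rule det_circulant_ne_zero) (use n in simp)
qed

lemma cyc_conv_cyc_pair_alt_sign: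
  assumes "odd n"
  shows "cyc_conv n (cyc_pair n 1) (\<lambda>d. (-1) ^ nat (d mod int n)) d = (2 * cyc_delta n 0 d :: 'a :: comm_ring_1)"
proof -
  have n: "n > 0"
    using assms by (cases n) auto
  show ?thesis
  proof (cases "d mod int n = 0")
    case True
    have "nat (int n - 1) = n - 1"
      by simp
    moreover have "even (n - 1)"
      using assms by presburger
    ultimately have "even (nat (int n - 1))"
      by simp
    then show ?thesis
      using n True by (simp add: cyc_conv_cyc_pair diff_one_mod_eq cyc_delta_def cong_def zmod_minus1)
  next
    case False
    moreover have "0 \<le> d mod int n"
      using n by simp
    ultimately have "nat (d mod int n) = Suc (nat (d mod int n - 1))"
      by simp
    then show ?thesis
      using n False by (simp add: cyc_conv_cyc_pair diff_one_mod_eq cyc_delta_def cong_def)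
  qed
qed

lemma det_circulant_cyc_pair_ne_zero:
  "odd n \<Longrightarrow> det (circulant n (cyc_pair n 1) :: 'a :: field_char_0 mat) \<noteq> 0"
  by (rule det_circulant_ne_zero[OF cyc_conv_cyc_pair_alt_sign]) simp_all

lemma cyc_conv_cyc_step_block:
  assumes n: "n > 0"
  shows "cyc_conv n (cyc_step n 1) (cyc_block n k) d = cyc_step n (int k) d + (of_nat k - 1)"
proof -
  have "cyc_block n k ((d - 1) mod int n) - cyc_block n k (d mod int n)
      = (\<Sum>i<k. cyc_delta n (int (Suc i)) d - cyc_delta n (int i) d)"
    by (simp add: cyc_block_def cyc_delta_diff sum_subtractf add.commute)
  also have "\<dots> = cyc_delta n (int k) d - cyc_delta n 0 d"
    using sum_lessThan_telescope[of "\<lambda>i. cyc_delta n (int i) d" k] by simp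
  finally show ?thesis
    using n by (simp add: cyc_conv_cyc_step sum_cyc_block cyc_step_def)
qed

lemma det_circulant_cyc_block:
  assumes n: "n > 0" and unit: "[\<kappa> * int k = 1] (mod int n)"
  shows "det (circulant n (cyc_block n k) :: 'a :: field_char_0 mat) = of_nat k"
proof -
  let ?A = "circulant n (cyc_step n 1) :: 'a mat"
  have "?A * circulant n (cyc_block n k) = circulant n (\<lambda>d. cyc_step n (int k) d + (of_nat k - 1))"
    unfolding circulant_mult by (rule circulant_cong) (simp add: cyc_conv_cyc_step_block n)
  then have "det ?A * det (circulant n (cyc_block n k))
      = det (circulant n (\<lambda>d. cyc_step n (int k) d + (of_nat k - 1)))"
    by (metis det_mult[OF circulant_carrier circulant_carrier])
  also have "\<dots> = det (circulant n (cyc_step n (int k))) * of_nat k"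
    using n by (simp add: det_circulant_add_const[OF sum_cyc_step[OF n]])
  also have "circulant n (cyc_step n (int k)) = circulant n (\<lambda>d. cyc_step n 1 ((\<kappa> * d) mod int n))"
    by (rule circulant_cong) (simp add: cyc_step_dilate[OF unit])
  also have "det \<dots> = det ?A"
    by (rule det_circulant_dilate[OF n unit])
  finally show ?thesis
    using det_circulant_cyc_step_ne_zero[OF n, where 'a = 'a] by (simp add: mult.commute)
qed

lemma cyc_conv_pair_alt_prog:
  assumes n: "n > 0" and "odd l" and "[int k * int l = 1] (mod int n)"
  shows "cyc_conv n (cyc_pair n (int k)) (cyc_alt_prog n k l) d = cyc_pair n 1 d"
proof -
  have "cyc_conv n (cyc_pair n (int k)) (cyc_alt_prog n k l) d
      = (\<Sum>j<l. (-1) ^ j * (cyc_delta n (int k * int (Suc j)) d + cyc_delta n (int k * int j) d))"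
    using n by (simp add: cyc_conv_cyc_pair cyc_alt_prog_def cyc_delta_diff sum.distrib distrib_left algebra_simps)
  also have "\<dots> = cyc_delta n 0 d + cyc_delta n (int k * int l) d"
    using assms(2) alternating_telescope[of "\<lambda>j. cyc_delta n (int k * int j) d" l] by simp
  also have "\<dots> = cyc_pair n 1 d"
    using cyc_delta_cong[OF assms(3)] by (simp add: cyc_pair_def)
  finally show ?thesis .
qed

lemma det_circulant_cyc_alt_prog:
  assumes "odd n" and "odd l" and unit: "[int k * int l = 1] (mod int n)"
  shows "det (circulant n (cyc_alt_prog n k l) :: 'a :: field_char_0 mat) = 1"
proof -
  have n: "n > 0"
    using assms by (cases n) auto
  have unit': "[int l * int k = 1] (mod int n)"
    using unit by (simp add: mult.commute)
  let ?P = "circulant n (cyc_pair n 1) :: 'a mat"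
  have "circulant n (cyc_pair n (int k)) * circulant n (cyc_alt_prog n k l) = ?P"
    unfolding circulant_mult by (rule circulant_cong) (simp add: cyc_conv_pair_alt_prog n assms)
  moreover have "circulant n (cyc_pair n (int k)) = circulant n (\<lambda>d. cyc_pair n 1 ((int l * d) mod int n))"
    by (rule circulant_cong) (simp add: cyc_pair_dilate[OF unit'])
  ultimately have "det ?P * det (circulant n (cyc_alt_prog n k l)) = det ?P"
    by (metis det_mult[OF circulant_carrier circulant_carrier] det_circulant_dilate[OF n unit'])
  then show ?thesis
    using det_circulant_cyc_pair_ne_zero[OF assms(1), where 'a = 'a] by simp
qed

lemma sum_cyc_block_prog: "n > 0 \<Longrightarrow> odd l \<Longrightarrow> sum (cyc_block_prog n k l) {0..<int n} = of_nat k"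
  by (simp add: cyc_block_prog_def sum_cyc_conv sum_cyc_block sum_cyc_alt_prog)

lemma det_circulant_cyc_block_prog_add_const:
  assumes "odd n" and "odd l" and "k > 0" and unit: "[int k * int l = 1] (mod int n)"
  shows "det (circulant n (\<lambda>d. cyc_block_prog n k l d + e))
    = of_nat k + of_nat n * (e :: 'a :: field_char_0)"
proof -
  have n: "n > 0"
    using assms by (cases n) auto
  have sum: "sum (cyc_block_prog n k l) {0..<int n} = (of_nat k :: 'a)"
    using n assms(2) by (rule sum_cyc_block_prog)
  moreover have "det (circulant n (cyc_block_prog n k l) :: 'a mat)
      = det (circulant n (cyc_block n k)) * det (circulant n (cyc_alt_prog n k l))"
    unfolding cyc_block_prog_def circulant_mult[symmetric]
    by (rule det_mult[OF circulant_carrier circulant_carrier])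
  moreover have "[int l * int k = 1] (mod int n)"
    using unit by (simp add: mult.commute)
  ultimately have "det (circulant n (cyc_block_prog n k l) :: 'a mat) = of_nat k"
    using det_circulant_cyc_block[OF n, of l k, where 'a = 'a]
      det_circulant_cyc_alt_prog[OF assms(1,2) unit, where 'a = 'a] by simp
  with det_circulant_add_const[OF sum]
  have "det (circulant n (\<lambda>d. cyc_block_prog n k l d + e)) = of_nat k * (1 + of_nat n * (e / of_nat k))"
    using assms(3) by simp
  also have "\<dots> = of_nat k + of_nat n * e"
    using assms(3) by (simp add: field_simps)
  finally show ?thesis .
qed

section \<open>Symmetry and parity of the circulant\<close>

lemma cyc_conv_pair_alt_block:
  assumes "n > 0" and "odd k"
  shows "cyc_conv n (cyc_pair n 1) (cyc_alt_block n k) d = cyc_pair n (int k) d"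
proof -
  have "cyc_conv n (cyc_pair n 1) (cyc_alt_block n k) d
      = (\<Sum>i<k. (-1) ^ i * (cyc_delta n (int (Suc i)) d + cyc_delta n (int i) d))"
    using assms(1)
    by (simp add: cyc_conv_cyc_pair cyc_alt_block_def cyc_delta_diff sum.distrib distrib_left algebra_simps)
  also have "\<dots> = cyc_pair n (int k) d"
    using assms(2) alternating_telescope[of "\<lambda>i. cyc_delta n (int i) d" k] by (simp add: cyc_pair_def)
  finally show ?thesis .
qed

text \<open>From \<open>(1 + t) Z = 1 + t\<close> one gets \<open>Z = 1\<close> over \<open>\<int>\<close> by multiplying with
  \<open>\<Sum>\<^sub>i (-1)^i t^i\<close>, which turns \<open>1 + t\<close> into \<open>2\<close> because \<open>n\<close> is odd.\<close>

lemma cyc_conv_alt_block_prog: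
  assumes "odd n" and "odd k" and "odd l" and "[int k * int l = 1] (mod int n)"
  shows "cyc_conv n (cyc_alt_block n k) (cyc_alt_prog n k l) d = (cyc_delta n 0 d :: int)"
proof -
  have n: "n > 0"
    using assms(1) by (cases n) auto
  define Z :: "int \<Rightarrow> int" where "Z = cyc_conv n (cyc_alt_block n k) (cyc_alt_prog n k l)"
  define Q :: "int \<Rightarrow> int" where "Q = (\<lambda>d. (-1) ^ nat (d mod int n))"
  have PH: "cyc_conv n (cyc_pair n 1) (cyc_alt_block n k) = (cyc_pair n (int k) :: int \<Rightarrow> int)"
    using cyc_conv_pair_alt_block[OF n assms(2), where 'a = int] by (simp add: fun_eq_iff)
  have PZ: "cyc_conv n (cyc_pair n 1) Z = cyc_pair n 1"
  proof
    fix d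
    have "cyc_conv n (cyc_pair n 1) Z d = cyc_conv n (cyc_pair n (int k)) (cyc_alt_prog n k l) d"
      by (simp add: Z_def PH flip: cyc_conv_assoc)
    also have "\<dots> = cyc_pair n 1 d"
      by (rule cyc_conv_pair_alt_prog[OF n assms(3,4)])
    finally show "cyc_conv n (cyc_pair n 1) Z d = cyc_pair n 1 d" .
  qed
  have QP: "cyc_conv n Q (cyc_pair n 1) = (\<lambda>d. 2 * cyc_delta n 0 d)"
  proof
    fix d
    have "cyc_conv n Q (cyc_pair n 1) d = cyc_conv n (cyc_pair n 1) Q d"
      by (rule cyc_conv_commute)
    also have "\<dots> = 2 * cyc_delta n 0 d"
      unfolding Q_def by (rule cyc_conv_cyc_pair_alt_sign[OF assms(1)])
    finally show "cyc_conv n Q (cyc_pair n 1) d = 2 * cyc_delta n 0 d" .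
  qed
  have "2 * cyc_delta n 0 d = cyc_conv n Q (cyc_conv n (cyc_pair n 1) Z) d"
    by (simp add: PZ QP)
  also have "\<dots> = cyc_conv n (\<lambda>d. 2 * cyc_delta n 0 d) Z d"
    by (simp add: QP flip: cyc_conv_assoc)
  also have "\<dots> = 2 * Z d"
    using n by (simp add: cyc_conv_scale_left cyc_conv_delta Z_def)
  finally show ?thesis
    by (simp add: Z_def)
qed

lemma cyc_block_prog_parity:
  assumes "odd n" and "odd k" and "odd l" and "[int k * int l = 1] (mod int n)"
  shows "even (cyc_block_prog n k l d - cyc_delta n 0 d :: int)"
proof -
  define D :: "int \<Rightarrow> int" where "D d = (\<Sum>i<k. (if odd i then 1 else 0) * cyc_delta n (int i) d)" for d
  have block_diff: "cyc_block n k d - cyc_alt_block n k d = 2 * D d" for d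
    unfolding cyc_block_def cyc_alt_block_def D_def sum_subtractf[symmetric] sum_distrib_left
    by (intro sum.cong) (auto simp: minus_one_power_iff)
  have "cyc_block_prog n k l d - cyc_delta n 0 d
      = (cyc_conv n (\<lambda>d. cyc_block n k d - cyc_alt_block n k d) (cyc_alt_prog n k l) d :: int)"
    by (simp add: cyc_block_prog_def cyc_conv_diff_left cyc_conv_alt_block_prog[OF assms])
  also have "\<dots> = 2 * cyc_conv n D (cyc_alt_prog n k l) d"
    by (simp add: block_diff cyc_conv_scale_left)
  finally show ?thesis
    by simp
qed

lemma cyc_block_prog_expand:
  assumes "n > 0"
  shows "cyc_block_prog n k l d = (\<Sum>i<k. \<Sum>j<l. (-1) ^ j * cyc_delta n (int k * int j + int i) d)"
  unfolding cyc_block_prog_def cyc_block_def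
  by (simp add: cyc_conv_sum_left cyc_conv_delta[OF assms] cyc_alt_prog_def cyc_delta_diff)

lemma cyc_block_prog_mod [simp]: "cyc_block_prog n k l (d mod int n) = cyc_block_prog n k l d"
  by (simp add: cyc_block_prog_def)

lemma of_int_cyc_block_prog: "n > 0 \<Longrightarrow> of_int (cyc_block_prog n k l d) = cyc_block_prog n k l d"
  by (simp add: cyc_block_prog_expand)

text \<open>Reversing both summation ranges maps the exponent \<open>kj + i\<close> to \<open>kl - 1 - (kj + i)\<close>,
  which is \<open>-(kj + i)\<close> modulo \<open>n\<close>.\<close>

lemma cyc_block_prog_minus:
  assumes n: "n > 0" and "odd l" and unit: "[int k * int l = 1] (mod int n)"
  shows "cyc_block_prog n k l (- d) = cyc_block_prog n k l d"
proof -
  have unit0: "[int k * int l - 1 = 0] (mod int n)"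
    using unit by (simp add: cong_diff_iff_cong_0)
  have reflect: "(-1) ^ (l - Suc j) * cyc_delta n (int k * int (l - Suc j) + int (k - Suc i)) (- d)
      = ((-1) ^ j * cyc_delta n (int k * int j + int i) d :: 'a)" if "i < k" "j < l" for i j
  proof -
    have "even (l - Suc j) \<longleftrightarrow> even j"
      using that assms(2) by presburger
    then have sign: "(-1) ^ (l - Suc j) = ((-1) ^ j :: 'a)"
      by (simp add: minus_one_power_iff)
    have "- (int k * int (l - Suc j) + int (k - Suc i)) = (int k * int j + int i) - (int k * int l - 1)"
      using that by (simp add: of_nat_diff algebra_simps)
    also have "[\<dots> = (int k * int j + int i) - 0] (mod int n)"
      by (rule cong_diff[OF cong_refl unit0])
    finally have "cyc_delta n (- (int k * int (l - Suc j) + int (k - Suc i))) d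
        = (cyc_delta n (int k * int j + int i) d :: 'a)"
      by (intro cyc_delta_cong) simp
    then show ?thesis
      by (simp add: sign cyc_delta_minus)
  qed
  have "cyc_block_prog n k l (- d) = (\<Sum>i<k. \<Sum>j<l.
      (\<lambda>i j. (-1) ^ j * cyc_delta n (int k * int j + int i) (- d) :: 'a) (k - Suc i) (l - Suc j))"
    unfolding cyc_block_prog_expand[OF n] by (rule sum_lessThan_reverse2)
  also have "\<dots> = cyc_block_prog n k l d"
    unfolding cyc_block_prog_expand[OF n] by (intro sum.cong refl) (rule reflect; simp)
  finally show ?thesis .
qed

lemma periodic_symmetric_reflect:
  assumes periodic: "\<And>d. u (d mod int n) = u d" and symmetric: "\<And>d. u (- d) = u d"
  shows "u (int n - x) = u x"
proof -
  have "u (int n - x) = u ((int n - x) mod int n)"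
    by (rule periodic[symmetric])
  also have "\<dots> = u (- x)"
    by (simp add: periodic)
  finally show ?thesis
    by (simp add: symmetric)
qed

lemma sum_residues_symmetric:
  fixes u :: "int \<Rightarrow> int"
  assumes "odd n" and periodic: "\<And>d. u (d mod int n) = u d" and symmetric: "\<And>d. u (- d) = u d"
  shows "sum u {0..<int n} = u 0 + 2 * sum u {1..(int n - 1) div 2}"
proof -
  have n: "n > 0"
    using assms(1) by (cases n) auto
  define h where "h = (int n - 1) div 2"
  have nh: "int n = 2 * h + 1" and "h \<ge> 0"
    using assms(1) n unfolding h_def by presburger+
  have "sum u {h + 1..<int n} = sum u {1..h}"
    by (rule sum.reindex_bij_witness[of _ "\<lambda>d. int n - d" "\<lambda>d. int n - d"])
      (use nh periodic_symmetric_reflect[OF periodic symmetric] in auto)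
  moreover have "{0..<int n} = insert 0 ({1..h} \<union> {h + 1..<int n})"
    unfolding set_eq_iff using nh \<open>h \<ge> 0\<close> by auto
  then have "sum u {0..<int n} = u 0 + (sum u {1..h} + sum u {h + 1..<int n})"
    by (simp only:) (subst sum.insert, use \<open>h \<ge> 0\<close> in \<open>auto intro: sum.union_disjoint\<close>)
  ultimately show ?thesis
    by (simp add: h_def)
qed

lemma residue_zero_cong_sum:
  fixes u :: "int \<Rightarrow> int"
  assumes "odd n" and periodic: "\<And>d. u (d mod int n) = u d" and symmetric: "\<And>d. u (- d) = u d"
    and even: "\<And>d. \<not> [d = 0] (mod int n) \<Longrightarrow> even (u d)"
  shows "[u 0 = sum u {0..<int n}] (mod 4)"
proof -
  define h where "h = (int n - 1) div 2"
  have nh: "int n = 2 * h + 1"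
    using assms(1) unfolding h_def by presburger
  have "even (u d)" if "d \<in> {1..h}" for d
    using even[of d] that nh by (simp add: cong_0_iff zdvd_not_zless)
  then have "even (sum u {1..h})"
    by (intro dvd_sum) auto
  then obtain s where "sum u {1..h} = 2 * s" ..
  then have "sum u {0..<int n} = u 0 + 4 * s"
    using sum_residues_symmetric[OF assms(1-3)] by (simp add: h_def)
  then show ?thesis
    by (simp add: cong_def)
qed

text \<open>The junk value of \<open>W\<close> on residues above \<open>(n - 1) / 2\<close> is \<open>0\<close>; each pair \<open>{r, n - r}\<close> of
  nonzero residues is then carried by the smaller one.\<close>

lemma symmetric_decomposition:
  fixes u :: "int \<Rightarrow> int"
  assumes "odd n" and periodic: "\<And>d. u (d mod int n) = u d" and symmetric: "\<And>d. u (- d) = u d"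
    and even: "\<And>d. \<not> [d = 0] (mod int n) \<Longrightarrow> even (u d)"
    and zero: "[u 0 = 1] (mod 4)"
  obtains W where "\<And>d. u d = cyc_delta n 0 d + 2 * W (d mod int n) + 2 * W ((- d) mod int n)"
proof -
  have n: "n > 0"
    using assms(1) by (cases n) auto
  define h where "h = (int n - 1) div 2"
  have nh: "int n = 2 * h + 1"
    using assms(1) unfolding h_def by presburger
  have even_between: "even (u x)" if "0 < x" "x < int n" for x
    using even that by (simp add: cong_0_iff zdvd_not_zless)
  define q where "q = u 0 div 4"
  have "u 0 mod 4 = 1"
    using zero by (simp add: cong_def)
  then have q: "u 0 = 1 + 4 * q"
    using div_mult_mod_eq[of "u 0" 4] by (simp add: q_def)
  define W where "W r = (if r = 0 then q else if r \<le> h then u r div 2 else 0)" for r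
  show thesis
  proof (rule that)
    fix d
    define r where "r = d mod int n"
    have r: "0 \<le> r" "r < int n"
      using n by (simp_all add: r_def)
    have neg: "(- d) mod int n = (if r = 0 then 0 else int n - r)"
      unfolding r_def by (rule zmod_zminus1_eq_if)
    have ud: "u d = u r"
      using periodic by (simp add: r_def)
    have delta: "cyc_delta n 0 d = (if r = 0 then 1 else (0 :: int))"
      by (simp add: r_def cyc_delta_def cong_def)
    consider "r = 0" | "0 < r" "r \<le> h" | "h < r"
      using r by linarith
    then show "u d = cyc_delta n 0 d + 2 * W (d mod int n) + 2 * W ((- d) mod int n)"
    proof cases
      case 1
      then show ?thesis
        using ud delta q by (simp add: neg W_def flip: r_def)
    next
      case 2
      moreover have "int n - r \<noteq> 0" "\<not> int n - r \<le> h"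
        using 2 nh by linarith+
      ultimately show ?thesis
        using ud delta even_between[of r] r by (simp add: neg W_def dvd_mult_div_cancel flip: r_def)
    next
      case 3
      moreover have "r \<noteq> 0" "0 < int n - r" "int n - r \<le> h"
        using 3 nh r by linarith+
      ultimately show ?thesis
        using ud delta even_between[of "int n - r"] periodic_symmetric_reflect[OF periodic symmetric, of r]
        by (simp add: neg W_def dvd_mult_div_cancel flip: r_def)
    qed
  qed
qed

lemma cyc_block_prog_decomposition:
  fixes c :: int
  assumes "odd n" and "odd l" and "[int k = 1] (mod 4)" and unit: "[int k * int l = 1] (mod int n)"
  obtains W where "\<And>d. cyc_block_prog n k l d + 4 * c
    = cyc_delta n 0 d + 2 * W (d mod int n) + 2 * W ((- d) mod int n)"
proof -
  have n: "n > 0"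
    using assms(1) by (cases n) auto
  have "int k mod 4 = 1"
    using assms(3) by (simp add: cong_def)
  then have "odd k"
    by presburger
  have periodic: "cyc_block_prog n k l (d mod int n) + 4 * c = cyc_block_prog n k l d + 4 * c" for d
    by simp
  have symmetric: "cyc_block_prog n k l (- d) + 4 * c = cyc_block_prog n k l d + 4 * c" for d
    using cyc_block_prog_minus[OF n assms(2) unit] by simp
  have even: "even (cyc_block_prog n k l d + 4 * c)" if "\<not> [d = 0] (mod int n)" for d
    using cyc_block_prog_parity[OF assms(1) \<open>odd k\<close> assms(2) unit, of d] that
    by (simp add: cyc_delta_def)
  have "(\<Sum>d\<in>{0..<int n}. cyc_block_prog n k l d + 4 * c) = int k + 4 * (c * int n)"
    using sum_cyc_block_prog[OF n assms(2), where 'a = int] by (simp add: sum.distrib)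
  then have "[(\<Sum>d\<in>{0..<int n}. cyc_block_prog n k l d + 4 * c) = 1] (mod 4)"
    using \<open>int k mod 4 = 1\<close> by (simp add: cong_def)
  then have "[cyc_block_prog n k l 0 + 4 * c = 1] (mod 4)"
    using residue_zero_cong_sum[of n "\<lambda>d. cyc_block_prog n k l d + 4 * c", OF assms(1) periodic symmetric even]
    by (rule cong_trans[rotated])
  then show thesis
    using symmetric_decomposition[of n "\<lambda>d. cyc_block_prog n k l d + 4 * c",
        OF assms(1) periodic symmetric even] that
    by blast
qed

lemma det_circulant_cyc_block_prog_add_const_int:
  fixes e :: int
  assumes "odd n" and "odd l" and "k > 0" and "[int k * int l = 1] (mod int n)"
  shows "det (circulant n (\<lambda>d. cyc_block_prog n k l d + e)) = int k + int n * e"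
proof -
  have n: "n > 0"
    using assms(1) by (cases n) auto
  have "(of_int (det (circulant n (\<lambda>d. cyc_block_prog n k l d + e))) :: rat)
      = det (circulant n (\<lambda>d. cyc_block_prog n k l d + of_int e))"
    by (simp add: of_int_det_circulant of_int_cyc_block_prog[OF n])
  also have "\<dots> = of_int (int k + int n * e)"
    using det_circulant_cyc_block_prog_add_const[OF assms] by simp
  finally show ?thesis
    by (simp only: of_int_eq_iff)
qed

section \<open>The dicyclic group\<close>

lemma dicyclic_simps:
  "carrier (dicyclic n) = {0..<2 * int n} \<times> {0, 1}"
  "x \<otimes>\<^bsub>dicyclic n\<^esub> y = dicyclic_mult n x y"
  "\<one>\<^bsub>dicyclic n\<^esub> = (0, 0)"
  by (simp_all add: dicyclic_def)

lemma dicyclic_mult_assoc: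
  assumes "b \<in> {0, 1}" and "d \<in> {0, 1}" and "f \<in> {0, 1}"
  shows "dicyclic_mult n (dicyclic_mult n (a, b) (c, d)) (e, f)
    = dicyclic_mult n (a, b) (dicyclic_mult n (c, d) (e, f))"
  using assms
  by (auto simp: dicyclic_mult_def mod_simps algebra_simps mod_add_mod_diff_eq)
    (simp_all add: mod_eq_dvd_iff algebra_simps)

definition dicyclic_inv :: "nat \<Rightarrow> int \<times> int \<Rightarrow> int \<times> int" where
  "dicyclic_inv n g = (if snd g = 0 then ((- fst g) mod (2 * int n), 0)
     else ((fst g + int n) mod (2 * int n), 1))"

lemma dicyclic_inv_closed:
  assumes "n > 0" and "g \<in> carrier (dicyclic n)"
  shows "dicyclic_inv n g \<in> carrier (dicyclic n)"
proof -
  obtain a b where "g = (a, b)" "b \<in> {0, 1}"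
    using assms(2) by (auto simp: dicyclic_simps)
  then show ?thesis
    using assms(1) by (auto simp: dicyclic_simps dicyclic_inv_def)
qed

lemma dicyclic_inv_mult:
  "g \<in> carrier (dicyclic n) \<Longrightarrow> dicyclic_mult n (dicyclic_inv n g) g = (0, 0)"
  by (auto simp: dicyclic_simps dicyclic_inv_def dicyclic_mult_def mod_simps mod_mod_diff_add_eq)

lemma group_dicyclic:
  assumes "n > 0"
  shows "group (dicyclic n)"
proof (rule groupI)
  show "x \<otimes>\<^bsub>dicyclic n\<^esub> y \<in> carrier (dicyclic n)"
    if "x \<in> carrier (dicyclic n)" "y \<in> carrier (dicyclic n)" for x y
    using that assms by (auto simp: dicyclic_simps dicyclic_mult_def)
  show "\<one>\<^bsub>dicyclic n\<^esub> \<in> carrier (dicyclic n)"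
    using assms by (simp add: dicyclic_simps)
  show "x \<otimes>\<^bsub>dicyclic n\<^esub> y \<otimes>\<^bsub>dicyclic n\<^esub> z = x \<otimes>\<^bsub>dicyclic n\<^esub> (y \<otimes>\<^bsub>dicyclic n\<^esub> z)"
    if "x \<in> carrier (dicyclic n)" "y \<in> carrier (dicyclic n)" "z \<in> carrier (dicyclic n)" for x y z
    using that by (cases x, cases y, cases z) (simp add: dicyclic_simps dicyclic_mult_assoc)
  show "\<one>\<^bsub>dicyclic n\<^esub> \<otimes>\<^bsub>dicyclic n\<^esub> x = x" if "x \<in> carrier (dicyclic n)" for x
    using that by (auto simp: dicyclic_simps dicyclic_mult_def)
  show "\<exists>y \<in> carrier (dicyclic n). y \<otimes>\<^bsub>dicyclic n\<^esub> x = \<one>\<^bsub>dicyclic n\<^esub>"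
    if "x \<in> carrier (dicyclic n)" for x
  proof (rule bexI[of _ "dicyclic_inv n x"])
    show "dicyclic_inv n x \<in> carrier (dicyclic n)"
      by (rule dicyclic_inv_closed[OF assms that])
    show "dicyclic_inv n x \<otimes>\<^bsub>dicyclic n\<^esub> x = \<one>\<^bsub>dicyclic n\<^esub>"
      using dicyclic_inv_mult[OF that] by (simp add: dicyclic_simps)
  qed
qed

lemma dicyclic_inv_eq:
  assumes "n > 0" and "g \<in> carrier (dicyclic n)"
  shows "inv\<^bsub>dicyclic n\<^esub> g = dicyclic_inv n g"
proof (rule group.inv_equality[OF group_dicyclic[OF assms(1)]])
  show "dicyclic_inv n g \<otimes>\<^bsub>dicyclic n\<^esub> g = \<one>\<^bsub>dicyclic n\<^esub>"
    using dicyclic_inv_mult[OF assms(2)] by (simp add: dicyclic_simps)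
qed (use assms dicyclic_inv_closed in auto)

text \<open>Modulo \<open>n\<close>, i.e. in the dihedral quotient \<open>Q\<^sub>4\<^sub>n / \<langle>x^n\<rangle>\<close>, the first coordinate transforms
  affinely: \<open>x^a y^b\<close> acts on it by \<open>c \<mapsto> a + (-1)^b c\<close>.\<close>

definition dicyclic_sign :: "int \<times> int \<Rightarrow> int" where
  "dicyclic_sign g = (if snd g = 0 then 1 else -1)"

lemma dicyclic_mult_fst_mod:
  "fst (dicyclic_mult n g h) mod int n = (fst g + dicyclic_sign g * fst h) mod int n"
  by (cases g, cases h) (auto simp: dicyclic_mult_def dicyclic_sign_def mod_mod_cancel)

lemma dicyclic_inv_fst_mod:
  "fst (dicyclic_inv n g) mod int n = (- dicyclic_sign g * fst g) mod int n"
  by (cases g) (auto simp: dicyclic_inv_def dicyclic_sign_def mod_mod_cancel)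

lemma dicyclic_div_fst_mod:
  assumes "n > 0" and "h \<in> carrier (dicyclic n)"
  shows "fst (g \<otimes>\<^bsub>dicyclic n\<^esub> inv\<^bsub>dicyclic n\<^esub> h) mod int n
    = (fst g - dicyclic_sign g * dicyclic_sign h * fst h) mod int n"
proof -
  have "fst (g \<otimes>\<^bsub>dicyclic n\<^esub> inv\<^bsub>dicyclic n\<^esub> h) mod int n
      = (fst g + dicyclic_sign g * (fst (dicyclic_inv n h) mod int n)) mod int n"
    using assms by (simp add: dicyclic_simps dicyclic_inv_eq dicyclic_mult_fst_mod mod_add_mult_mod_eq)
  then show ?thesis
    by (simp add: dicyclic_inv_fst_mod mod_add_mult_mod_eq mult.assoc)
qed

section \<open>The group matrix of the dicyclic group\<close>

text \<open>The elements are listed in blocks of four: block \<open>l\<close> is \<open>x^l, y x^l, y^2 x^l, y^3 x^l\<close>,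
  so that left multiplication by \<open>y\<close> rotates each block.\<close>

definition dicyclic_enum :: "nat \<Rightarrow> nat \<Rightarrow> int \<times> int" where
  "dicyclic_enum n q = (let l = int (q div 4) in
     if q mod 4 = 0 then (l, 0) else if q mod 4 = 1 then (int n - l, 1)
     else if q mod 4 = 2 then (int n + l, 0) else ((- l) mod (2 * int n), 1))"

definition dicyclic_index :: "nat \<Rightarrow> int \<times> int \<Rightarrow> nat" where
  "dicyclic_index n g = (if snd g = 0
     then (if fst g < int n then 4 * nat (fst g) else 4 * nat (fst g - int n) + 2)
     else (if fst g = 0 then 3 else if fst g \<le> int n then 4 * nat (int n - fst g) + 1
       else 4 * nat (2 * int n - fst g) + 3))"

lemma dicyclic_enum_block:
  "dicyclic_enum n (4 * l) = (int l, 0)"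
  "dicyclic_enum n (4 * l + 1) = (int n - int l, 1)"
  "dicyclic_enum n (4 * l + 2) = (int n + int l, 0)"
  "dicyclic_enum n (4 * l + 3) = ((- int l) mod (2 * int n), 1)"
  using four_mul_add_div_mod[of l] by (simp_all add: dicyclic_enum_def)

lemma dicyclic_enum_cases:
  assumes "q < 4 * n"
  obtains (zero) l where "l < n" "q div 4 = l" "q = 4 * l" "dicyclic_enum n q = (int l, 0)"
  | (one) l where "l < n" "q div 4 = l" "q = 4 * l + 1" "dicyclic_enum n q = (int n - int l, 1)"
  | (two) l where "l < n" "q div 4 = l" "q = 4 * l + 2" "dicyclic_enum n q = (int n + int l, 0)"
  | (three) l where "l < n" "q div 4 = l" "q = 4 * l + 3"
      "dicyclic_enum n q = ((- int l) mod (2 * int n), 1)"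
proof -
  define l where "l = q div 4"
  have "l < n"
    using assms by (simp add: l_def)
  have "q = 4 * l \<or> q = 4 * l + 1 \<or> q = 4 * l + 2 \<or> q = 4 * l + 3"
    unfolding l_def by presburger
  then show ?thesis
    using that \<open>l < n\<close> dicyclic_enum_block[of n l] by (auto simp: l_def)
qed

lemma dicyclic_enum_in_carrier:
  assumes "q < 4 * n"
  shows "dicyclic_enum n q \<in> carrier (dicyclic n)"
proof -
  have "int (q div 4) < int n"
    using assms by auto
  then show ?thesis
    by (cases q rule: mod_4_cases) (auto simp: dicyclic_enum_def Let_def dicyclic_simps)
qed

lemma dicyclic_index_enum:
  assumes "q < 4 * n"
  shows "dicyclic_index n (dicyclic_enum n q) = q"
proof -
  have l: "int (q div 4) < int n"
    using assms by auto
  have "dicyclic_index n (dicyclic_enum n q) = 4 * (q div 4) + q mod 4"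
  proof (cases q rule: mod_4_cases)
    case 4
    then show ?thesis
      using l by (cases "q div 4 = 0") (simp_all add: dicyclic_enum_def dicyclic_index_def zmod_zminus1_eq_if)
  qed (use l in \<open>simp_all add: dicyclic_enum_def dicyclic_index_def\<close>)
  then show ?thesis
    by simp
qed

lemma bij_betw_dicyclic_enum:
  assumes "n > 0"
  shows "bij_betw (dicyclic_enum n) {0..<4 * n} (carrier (dicyclic n))"
proof -
  have inj: "inj_on (dicyclic_enum n) {0..<4 * n}"
    by (rule inj_on_inverseI[of _ "dicyclic_index n"]) (simp add: dicyclic_index_enum)
  have "dicyclic_enum n ` {0..<4 * n} \<subseteq> carrier (dicyclic n)"
    using dicyclic_enum_in_carrier by auto
  moreover have "card (dicyclic_enum n ` {0..<4 * n}) = card (carrier (dicyclic n))"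
    using card_image[OF inj] by (simp add: dicyclic_simps card_cartesian_product)
  ultimately have "dicyclic_enum n ` {0..<4 * n} = carrier (dicyclic n)"
    by (intro card_subset_eq) (simp_all add: dicyclic_simps)
  with inj show ?thesis
    by (simp add: bij_betw_def)
qed

lemma dicyclic_sign_fst_enum:
  assumes "q < 4 * n"
  shows "dicyclic_sign (dicyclic_enum n q) * fst (dicyclic_enum n q) mod int n = int (q div 4)"
  using assms
proof (cases rule: dicyclic_enum_cases)
  case (three l)
  then show ?thesis
    using neg_mod_double_mod[of l n] by (simp add: dicyclic_sign_def)
qed (simp_all add: dicyclic_sign_def)

definition dicyclic_group_matrix :: "nat \<Rightarrow> (int \<times> int \<Rightarrow> 'a) \<Rightarrow> 'a mat" where
  "dicyclic_group_matrix n f = mat (4 * n) (4 * n) (\<lambda>(p, q).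
     f (dicyclic_enum n p \<otimes>\<^bsub>dicyclic n\<^esub> inv\<^bsub>dicyclic n\<^esub> dicyclic_enum n q))"

lemma group_det_dicyclic_eq_det:
  assumes "n > 0"
  shows "group_det (dicyclic n) f = det (dicyclic_group_matrix n f)"
  unfolding group_det_def dicyclic_group_matrix_def
  by (rule leibniz_sum_reindex_det[OF bij_betw_dicyclic_enum[OF assms],
        where F = "\<lambda>g h. f (g \<otimes>\<^bsub>dicyclic n\<^esub> inv\<^bsub>dicyclic n\<^esub> h)"])

text \<open>Modulo \<open>n\<close> the first coordinate of \<open>g h\<inverse>\<close> is \<open>fst g - sign g * (sign h * fst h)\<close>, and
  \<open>sign h * fst h\<close> is the block number \<open>q div 4\<close> of \<open>h = dicyclic_enum n q\<close>; so the rank-\<open>n\<close> part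
  of the group matrix factors through \<open>n\<close> columns.\<close>

definition dicyclic_left_factor :: "nat \<Rightarrow> (int \<Rightarrow> int) \<Rightarrow> int mat" where
  "dicyclic_left_factor n W = mat (4 * n) n (\<lambda>(p, l).
     W ((fst (dicyclic_enum n p) - dicyclic_sign (dicyclic_enum n p) * int l) mod int n))"

definition dicyclic_right_factor :: "nat \<Rightarrow> int mat" where
  "dicyclic_right_factor n = mat n (4 * n) (\<lambda>(l, q). if l = q div 4 then 1 else 0)"

lemma dicyclic_left_factor_carrier: "dicyclic_left_factor n W \<in> carrier_mat (4 * n) n"
  by (simp add: dicyclic_left_factor_def)

lemma dicyclic_right_factor_carrier: "dicyclic_right_factor n \<in> carrier_mat n (4 * n)"
  by (simp add: dicyclic_right_factor_def)

lemma dicyclic_group_matrix_factor: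
  assumes n: "n > 0"
  shows "dicyclic_group_matrix n (\<lambda>g. (if g = \<one>\<^bsub>dicyclic n\<^esub> then 1 else 0) + W (fst g mod int n))
    = 1\<^sub>m (4 * n) + dicyclic_left_factor n W * dicyclic_right_factor n"
proof (rule eq_matI)
  interpret G: group "dicyclic n"
    by (rule group_dicyclic[OF n])
  fix p q
  assume "p < dim_row (1\<^sub>m (4 * n) + dicyclic_left_factor n W * dicyclic_right_factor n)"
    and "q < dim_col (1\<^sub>m (4 * n) + dicyclic_left_factor n W * dicyclic_right_factor n)"
  then have p: "p < 4 * n" and q: "q < 4 * n"
    by (simp_all add: dicyclic_left_factor_def dicyclic_right_factor_def)
  define g h where "g = dicyclic_enum n p" and "h = dicyclic_enum n q"
  have g: "g \<in> carrier (dicyclic n)" and h: "h \<in> carrier (dicyclic n)"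
    using p q by (simp_all add: g_def h_def dicyclic_enum_in_carrier)
  have "(dicyclic_left_factor n W * dicyclic_right_factor n) $$ (p, q)
      = (\<Sum>l\<in>{0..<n}. if l = q div 4 then W ((fst g - dicyclic_sign g * int l) mod int n) else 0)"
    using p q by (simp add: dicyclic_left_factor_def dicyclic_right_factor_def scalar_prod_def g_def h_def
        if_distrib[of "\<lambda>x. _ * x"] cong: if_cong)
  also have "\<dots> = W ((fst g - dicyclic_sign g * int (q div 4)) mod int n)"
    using q by simp
  finally have factor: "(dicyclic_left_factor n W * dicyclic_right_factor n) $$ (p, q)
      = W ((fst g - dicyclic_sign g * int (q div 4)) mod int n)" .
  have "fst (g \<otimes>\<^bsub>dicyclic n\<^esub> inv\<^bsub>dicyclic n\<^esub> h) mod int n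
      = (fst g - dicyclic_sign g * (dicyclic_sign h * fst h)) mod int n"
    using dicyclic_div_fst_mod[OF n h] by (simp add: mult.assoc)
  also have "\<dots> = (fst g - dicyclic_sign g * (dicyclic_sign h * fst h mod int n)) mod int n"
    by (metis mod_diff_right_eq mod_mult_right_eq)
  also have "\<dots> = (fst g - dicyclic_sign g * int (q div 4)) mod int n"
    using dicyclic_sign_fst_enum[OF q] by (simp add: g_def h_def)
  finally have fst: "fst (g \<otimes>\<^bsub>dicyclic n\<^esub> inv\<^bsub>dicyclic n\<^esub> h) mod int n
      = (fst g - dicyclic_sign g * int (q div 4)) mod int n" .
  have "g \<otimes>\<^bsub>dicyclic n\<^esub> inv\<^bsub>dicyclic n\<^esub> h = \<one>\<^bsub>dicyclic n\<^esub> \<longleftrightarrow> g = h"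
    using G.inv_solve_right'[OF G.one_closed g h] h by simp
  also have "\<dots> \<longleftrightarrow> p = q"
    using inj_onD[OF bij_betw_imp_inj_on[OF bij_betw_dicyclic_enum[OF n]]] p q by (auto simp: g_def h_def)
  finally show "dicyclic_group_matrix n (\<lambda>g. (if g = \<one>\<^bsub>dicyclic n\<^esub> then 1 else 0) + W (fst g mod int n)) $$ (p, q)
      = (1\<^sub>m (4 * n) + dicyclic_left_factor n W * dicyclic_right_factor n) $$ (p, q)"
    using p q factor fst
    by (simp add: dicyclic_group_matrix_def dicyclic_left_factor_def dicyclic_right_factor_def g_def h_def)
qed (simp_all add: dicyclic_group_matrix_def dicyclic_left_factor_def dicyclic_right_factor_def)

lemma sum_div_4_indicator:
  fixes g :: "nat \<Rightarrow> 'a :: comm_ring_1"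
  assumes "l < n"
  shows "(\<Sum>q\<in>{0..<4 * n}. (if l = q div 4 then 1 else 0) * g q)
    = g (4 * l) + g (4 * l + 1) + g (4 * l + 2) + g (4 * l + 3)"
proof -
  have "(\<Sum>q\<in>{0..<4 * n}. (if l = q div 4 then 1 else 0) * g q)
      = (\<Sum>q\<in>{0..<4 * n}. if l = q div 4 then g q else 0)"
    by (intro sum.cong) auto
  also have "\<dots> = (\<Sum>q\<in>{q\<in>{0..<4 * n}. l = q div 4}. g q)"
    by (rule sum.inter_filter[symmetric]) simp
  also have "{q\<in>{0..<4 * n}. l = q div 4} = {4 * l, 4 * l + 1, 4 * l + 2, 4 * l + 3}"
    using assms by auto
  finally show ?thesis
    by (simp add: ac_simps)
qed

lemma dicyclic_right_left_factor:
  assumes n: "n > 0"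
  shows "1\<^sub>m n + dicyclic_right_factor n * dicyclic_left_factor n W
    = circulant n (\<lambda>d. cyc_delta n 0 d + 2 * W (d mod int n) + 2 * W ((- d) mod int n))"
proof (rule eq_matI)
  fix l l'
  assume "l < dim_row (circulant n (\<lambda>d. cyc_delta n 0 d + 2 * W (d mod int n) + 2 * W ((- d) mod int n)))"
    and "l' < dim_col (circulant n (\<lambda>d. cyc_delta n 0 d + 2 * W (d mod int n) + 2 * W ((- d) mod int n)))"
  then have l: "l < n" and l': "l' < n"
    by (simp_all add: circulant_def)
  let ?X = "\<lambda>q. W ((fst (dicyclic_enum n q) - dicyclic_sign (dicyclic_enum n q) * int l') mod int n)"
  have "(dicyclic_right_factor n * dicyclic_left_factor n W) $$ (l, l')
      = (\<Sum>q\<in>{0..<4 * n}. (if l = q div 4 then 1 else 0) * ?X q)"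
    using l l' by (simp add: dicyclic_left_factor_def dicyclic_right_factor_def scalar_prod_def)
  also have "\<dots> = ?X (4 * l) + ?X (4 * l + 1) + ?X (4 * l + 2) + ?X (4 * l + 3)"
    by (rule sum_div_4_indicator[OF l])
  also have "\<dots> = 2 * W ((int l - int l') mod int n) + 2 * W ((int l' - int l) mod int n)"
  proof -
    have "((- int l) mod (2 * int n) + int l') mod int n
        = ((- int l) mod (2 * int n) mod int n + int l') mod int n"
      by (rule mod_add_left_eq[symmetric])
    also have "\<dots> = (int l' - int l) mod int n"
      by (simp add: mod_mod_cancel mod_add_left_eq)
    moreover have "(int n - int l + int l') mod int n = (int l' - int l) mod int n"
      "(int n + int l - int l') mod int n = (int l - int l') mod int n"
      by (simp_all add: mod_eq_dvd_iff)
    ultimately show ?thesis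
      unfolding dicyclic_enum_block by (simp add: dicyclic_sign_def)
  qed
  finally have "(dicyclic_right_factor n * dicyclic_left_factor n W) $$ (l, l')
      = 2 * W ((int l - int l') mod int n) + 2 * W ((int l' - int l) mod int n)" .
  moreover have "cyc_delta n 0 ((int l - int l') mod int n) = (if l = l' then 1 else (0 :: int))"
    using cong_int_diff_zero_iff[OF l l'] by (simp add: cyc_delta_def)
  moreover have "(- ((int l - int l') mod int n)) mod int n = (int l' - int l) mod int n"
    by (simp add: mod_minus_eq)
  ultimately show "(1\<^sub>m n + dicyclic_right_factor n * dicyclic_left_factor n W) $$ (l, l')
      = circulant n (\<lambda>d. cyc_delta n 0 d + 2 * W (d mod int n) + 2 * W ((- d) mod int n)) $$ (l, l')"
    using l l' by (simp add: circulant_def dicyclic_left_factor_def dicyclic_right_factor_def)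
qed (simp_all add: circulant_def dicyclic_left_factor_def dicyclic_right_factor_def)

lemma group_det_dicyclic_circulant:
  assumes "n > 0"
  shows "group_det (dicyclic n) (\<lambda>g. (if g = \<one>\<^bsub>dicyclic n\<^esub> then 1 else 0) + W (fst g mod int n))
    = det (circulant n (\<lambda>d. cyc_delta n 0 d + 2 * W (d mod int n) + 2 * W ((- d) mod int n)))"
  unfolding group_det_dicyclic_eq_det[OF assms] dicyclic_group_matrix_factor[OF assms]
    det_one_plus_mult_commute[OF dicyclic_left_factor_carrier dicyclic_right_factor_carrier]
    dicyclic_right_left_factor[OF assms] ..

section \<open>Left translation by the generator y\<close>

definition block_rotate :: "nat \<Rightarrow> nat \<Rightarrow> nat" where
  "block_rotate N q = (if q < 4 * N then 4 * (q div 4) + (q mod 4 + 1) mod 4 else q)"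

abbreviation block_cycle :: "nat \<Rightarrow> nat \<Rightarrow> nat" where
  "block_cycle N \<equiv> Transposition.transpose (4 * N) (4 * N + 1)
     \<circ> Transposition.transpose (4 * N + 1) (4 * N + 2) \<circ> Transposition.transpose (4 * N + 2) (4 * N + 3)"

lemma block_rotate_block:
  assumes "l < N"
  shows "block_rotate N (4 * l) = 4 * l + 1" "block_rotate N (4 * l + 1) = 4 * l + 2"
    "block_rotate N (4 * l + 2) = 4 * l + 3" "block_rotate N (4 * l + 3) = 4 * l"
  using four_mul_add_div_mod[of l] assms by (simp_all add: block_rotate_def)

lemma block_rotate_Suc: "block_rotate (Suc N) = block_rotate N \<circ> block_cycle N"
proof
  fix x
  have new_block: "block_rotate (Suc N) (4 * N) = 4 * N + 1" "block_rotate (Suc N) (4 * N + 1) = 4 * N + 2"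
    "block_rotate (Suc N) (4 * N + 2) = 4 * N + 3" "block_rotate (Suc N) (4 * N + 3) = 4 * N"
    by (simp_all only: block_rotate_block[of N "Suc N", OF lessI])
  have outside: "block_rotate N y = y" if "4 * N \<le> y" for y
    using that by (simp add: block_rotate_def)
  consider "x < 4 * N" | "x = 4 * N + 0" | "x = 4 * N + 1" | "x = 4 * N + 2" | "x = 4 * N + 3"
    | "4 * N + 4 \<le> x"
    by linarith
  then show "block_rotate (Suc N) x = (block_rotate N \<circ> block_cycle N) x"
  proof cases
    case 1
    then show ?thesis
      by (simp add: block_rotate_def Transposition.transpose_def)
  next
    case 6
    then show ?thesis
      using outside by (simp add: block_rotate_def Transposition.transpose_def)
  qed (use new_block outside in \<open>simp_all add: Transposition.transpose_def\<close>)
qed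

lemma block_rotate_zero: "block_rotate 0 = id"
  by (simp add: fun_eq_iff block_rotate_def)

lemma block_rotate_permutes: "block_rotate N permutes {0..<4 * N}"
proof (induction N)
  case 0
  show ?case
    unfolding block_rotate_zero by (rule permutes_id)
next
  case (Suc N)
  have "block_rotate N permutes {0..<4 * Suc N}"
    using Suc.IH by (rule permutes_subset) auto
  then show ?case
    unfolding block_rotate_Suc by (intro permutes_compose permutes_swap_id) auto
qed

lemma sign_block_rotate: "sign (block_rotate N) = (-1) ^ N"
proof (induction N)
  case 0
  show ?case
    by (simp add: block_rotate_zero)
next
  case (Suc N)
  let ?t1 = "Transposition.transpose (4 * N) (4 * N + 1)"
    and ?t2 = "Transposition.transpose (4 * N + 1) (4 * N + 2)"
    and ?t3 = "Transposition.transpose (4 * N + 2) (4 * N + 3)"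
  have "permutation ?t1" "permutation ?t2" "permutation ?t3" "permutation (block_rotate N)"
    using block_rotate_permutes permutes_imp_permutation by (blast intro: permutation_swap_id)+
  then have "sign (block_rotate (Suc N)) = sign (block_rotate N) * (sign ?t1 * (sign ?t2 * sign ?t3))"
    unfolding block_rotate_Suc by (simp add: sign_compose permutation_compose)
  then show ?case
    using Suc.IH by (simp add: sign_swap_id)
qed

lemma dicyclic_y_mult_enum:
  assumes "q < 4 * n"
  shows "(int n, 1) \<otimes>\<^bsub>dicyclic n\<^esub> dicyclic_enum n q = dicyclic_enum n (block_rotate n q)"
  using assms
proof (cases rule: dicyclic_enum_cases)
  case (zero l)
  then have "dicyclic_enum n (block_rotate n q) = (int n - int l, 1)"
    by (simp only: block_rotate_block dicyclic_enum_block)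
  then show ?thesis
    using zero by (simp add: dicyclic_simps dicyclic_mult_def)
next
  case (one l)
  then have "dicyclic_enum n (block_rotate n q) = (int n + int l, 0)"
    by (simp only: block_rotate_block dicyclic_enum_block)
  then show ?thesis
    using one by (simp add: dicyclic_simps dicyclic_mult_def)
next
  case (two l)
  then have "dicyclic_enum n (block_rotate n q) = ((- int l) mod (2 * int n), 1)"
    by (simp only: block_rotate_block dicyclic_enum_block)
  then show ?thesis
    using two by (simp add: dicyclic_simps dicyclic_mult_def)
next
  case (three l)
  then have "dicyclic_enum n (block_rotate n q) = (int l, 0)"
    by (simp only: block_rotate_block dicyclic_enum_block)
  moreover have "(int n - (- int l) mod (2 * int n) + int n) mod (2 * int n) = int l"
  proof -
    have "int n - (- int l) mod (2 * int n) + int n = 2 * int n - (- int l) mod (2 * int n)"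
      by simp
    then have "(int n - (- int l) mod (2 * int n) + int n) mod (2 * int n)
        = (- ((- int l) mod (2 * int n))) mod (2 * int n)"
      by (simp only: minus_mod_self1)
    also have "\<dots> = int l"
      using \<open>l < n\<close> by (simp add: mod_minus_eq)
    finally show ?thesis .
  qed
  ultimately show ?thesis
    using three by (simp add: dicyclic_simps dicyclic_mult_def)
qed

lemma group_det_dicyclic_left_translate:
  assumes n: "n > 0"
  shows "group_det (dicyclic n) (\<lambda>g. f ((int n, 1) \<otimes>\<^bsub>dicyclic n\<^esub> g)) = (-1) ^ n * group_det (dicyclic n) f"
proof -
  interpret G: group "dicyclic n"
    by (rule group_dicyclic[OF n])
  have y: "(int n, 1) \<in> carrier (dicyclic n)"
    using n by (simp add: dicyclic_simps)
  have rotate_less: "block_rotate n p < 4 * n" if "p < 4 * n" for p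
    using permutes_in_image[OF block_rotate_permutes] that by auto
  have "dicyclic_group_matrix n (\<lambda>g. f ((int n, 1) \<otimes>\<^bsub>dicyclic n\<^esub> g))
      = mat (4 * n) (4 * n) (\<lambda>(p, q). dicyclic_group_matrix n f $$ (block_rotate n p, q))"
  proof (rule eq_matI)
    fix p q
    assume "p < dim_row (mat (4 * n) (4 * n) (\<lambda>(p, q). dicyclic_group_matrix n f $$ (block_rotate n p, q)))"
      and "q < dim_col (mat (4 * n) (4 * n) (\<lambda>(p, q). dicyclic_group_matrix n f $$ (block_rotate n p, q)))"
    then have p: "p < 4 * n" and q: "q < 4 * n"
      by simp_all
    have "(int n, 1) \<otimes>\<^bsub>dicyclic n\<^esub> (dicyclic_enum n p \<otimes>\<^bsub>dicyclic n\<^esub> inv\<^bsub>dicyclic n\<^esub> dicyclic_enum n q)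
        = dicyclic_enum n (block_rotate n p) \<otimes>\<^bsub>dicyclic n\<^esub> inv\<^bsub>dicyclic n\<^esub> dicyclic_enum n q"
      using y p q by (simp add: G.m_assoc dicyclic_enum_in_carrier flip: dicyclic_y_mult_enum)
    then show "dicyclic_group_matrix n (\<lambda>g. f ((int n, 1) \<otimes>\<^bsub>dicyclic n\<^esub> g)) $$ (p, q)
        = mat (4 * n) (4 * n) (\<lambda>(p, q). dicyclic_group_matrix n f $$ (block_rotate n p, q)) $$ (p, q)"
      using p q rotate_less[OF p] by (simp add: dicyclic_group_matrix_def)
  qed (simp_all add: dicyclic_group_matrix_def)
  then show ?thesis
    unfolding group_det_dicyclic_eq_det[OF n]
    using det_permute_rows[OF _ block_rotate_permutes, of "dicyclic_group_matrix n f"]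
    by (simp add: dicyclic_group_matrix_def sign_block_rotate)
qed

lemma group_det_valuesI: "group_det G x = m \<Longrightarrow> m \<in> group_det_values G"
  by (auto simp: group_det_values_def)

lemma dicyclic_det_value_1_mod_4:
  assumes "odd n" and "[m = 1] (mod 4)" and "coprime m (int n)"
  shows "m \<in> group_det_values (dicyclic n)"
proof -
  have n: "n > 0"
    using assms(1) by (cases n) auto
  obtain k t where "k > 0" and k: "int k = m + 4 * int n * t"
    and k_mod_4: "[int k = 1] (mod 4)" and "coprime (int k) (2 * int n)"
    using exists_positive_shift_mod_4n[OF n assms(2,3)] by blast
  then obtain l where "odd l" and unit: "[int k * int l = 1] (mod int n)"
    using exists_odd_inverse_mod[OF n] by blast
  obtain W where W: "\<And>d. cyc_block_prog n k l d + 4 * (- t)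
      = cyc_delta n 0 d + 2 * W (d mod int n) + 2 * W ((- d) mod int n)"
    using cyc_block_prog_decomposition[OF assms(1) \<open>odd l\<close> k_mod_4 unit] by blast
  have "group_det (dicyclic n) (\<lambda>g. (if g = \<one>\<^bsub>dicyclic n\<^esub> then 1 else 0) + W (fst g mod int n))
      = det (circulant n (\<lambda>d. cyc_block_prog n k l d + 4 * (- t)))"
    unfolding group_det_dicyclic_circulant[OF n] W ..
  also have "\<dots> = int k + int n * (4 * (- t))"
    by (rule det_circulant_cyc_block_prog_add_const_int[OF assms(1) \<open>odd l\<close> \<open>k > 0\<close> unit])
  also have "\<dots> = m"
    by (simp add: k algebra_simps)
  finally show ?thesis
    by (rule group_det_valuesI)
qed

lemma dicyclic_det_values_uminus:
  assumes "odd n" and "m \<in> group_det_values (dicyclic n)"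
  shows "- m \<in> group_det_values (dicyclic n)"
proof -
  have n: "n > 0"
    using assms(1) by (cases n) auto
  obtain x where "group_det (dicyclic n) x = m"
    using assms(2) by (auto simp: group_det_values_def)
  then have "group_det (dicyclic n) (\<lambda>g. x ((int n, 1) \<otimes>\<^bsub>dicyclic n\<^esub> g)) = - m"
    using group_det_dicyclic_left_translate[OF n, of x] assms(1) by simp
  then show ?thesis
    by (rule group_det_valuesI)
qed

theorem mainTheorem9:
  fixes n :: nat and m :: int
  assumes "odd n" and "gcd m (2 * int n) = 1"
  shows "m \<in> group_det_values (dicyclic n)"
proof -
  have "coprime m (2 * int n)"
    using assms(2) by (simp add: coprime_iff_gcd_eq_1)
  then have "coprime m (int n)" and "odd m"
    by auto
  have "m mod 4 = 1 \<or> (- m) mod 4 = 1"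
    using \<open>odd m\<close> by presburger
  then show ?thesis
  proof
    assume "m mod 4 = 1"
    then show ?thesis
      using dicyclic_det_value_1_mod_4[OF assms(1)] \<open>coprime m (int n)\<close> by (simp add: cong_def)
  next
    assume "(- m) mod 4 = 1"
    then have "- m \<in> group_det_values (dicyclic n)"
      using dicyclic_det_value_1_mod_4[OF assms(1)] \<open>coprime m (int n)\<close> by (simp add: cong_def)
    then show ?thesis
      using dicyclic_det_values_uminus[OF assms(1)] by fastforce
  qed
qed

end
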